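(* Let $N\ge3$ and let $a_1,\dots,a_N\in\mathbb{Z}^2$ with $\sum_i a_i=0$. Then $\theta_N(a_1,\dots,a_N)=\frac{N!}{3!}\mu_N(a_1,\dots,a_N)$.
   Context: For $v,w\in\mathbb{Z}^2$, $v\wedge w=\det(v\,|\,w)$ and $[v\wedge w]_+=q^{\frac12 v\wedge w}+q^{-\frac12 v\wedge w}$ for a formal variable $q^{1/2}$. Let $\Omega_N$ be the set of cyclic permutations: orbits of the action of the cyclic group of order $N$ on orderings $(\tilde\omega(1),\dots,\tilde\omega(N))$ of $\{1,\dots,N\}$ by rotating positions. For $\omega\in\Omega_N$ choose a representative $\tilde\omega$ and set $k(\omega)=\sum_{2\le i<j\le N}a_{\tilde\omega(i)}\wedge a_{\tilde\omega(j)}$ (independent of the representative since $\sum a_i=0$). Define $\mu_N(a_1,\dots,a_N)=\sum_{\omega\in\Omega_N}q^{k(\omega)/2}$. The Blechman–Shustin multiplicity is defined recursively by $\theta_3(a_1,a_2,a_3)=[a_1\wedge a_2]_+$ and, for $N\ge4$, $\theta_N(a_1,\dots,a_N)=\sum_{1\le i<j\le N}\theta_{N-1}(a_1,\dots,\hat a_i,\dots,\hat a_j,\dots,a_N,a_i+a_j)\,\theta_3(a_i,a_j,-(a_i+a_j))$, where hats denote omission. *)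

theory Defs
  imports "HOL-Computational_Algebra.Formal_Laurent_Series" "HOL-Library.Product_Plus"
begin

text \<open>Vectors in Z^2 are pairs of integers. Laurent polynomials in the formal
variable t = q^(1/2) are formal Laurent series over the rationals; q^(m/2) = t^m.\<close>

type_synonym vec2 = "int \<times> int"
type_synonym lpoly = "rat fls"

definition wedge :: "vec2 \<Rightarrow> vec2 \<Rightarrow> int" where
  "wedge v w = fst v * snd w - snd v * fst w"

definition qhalf :: "int \<Rightarrow> lpoly" where
  "qhalf m = fls_X_intpow m"

definition bracket_plus :: "vec2 \<Rightarrow> vec2 \<Rightarrow> lpoly" where
  "bracket_plus v w = qhalf (wedge v w) + qhalf (- wedge v w)"

definition theta3 :: "vec2 \<Rightarrow> vec2 \<Rightarrow> vec2 \<Rightarrow> lpoly" where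
  "theta3 a1 a2 a3 = bracket_plus a1 a2"

definition merge_pair :: "vec2 list \<Rightarrow> nat \<Rightarrow> nat \<Rightarrow> vec2 list" where
  "merge_pair xs i j =
     map (\<lambda>k. xs ! k) (filter (\<lambda>k. k \<noteq> i \<and> k \<noteq> j) [0..<length xs]) @ [xs ! i + xs ! j]"

lemma length_merge_pair:
  assumes "i < j" "j < length xs"
  shows "length (merge_pair xs i j) < length xs"
proof -
  have "length (filter (\<lambda>k. k \<noteq> i \<and> k \<noteq> j) [0..<length xs]) < length xs - 1"
  proof -
    have "length (filter (\<lambda>k. k \<noteq> i \<and> k \<noteq> j) [0..<length xs])
          = card ({0..<length xs} - {i, j})"
      by (simp add: length_filter_conv_card, rule arg_cong[where f=card], auto)
    also have "\<dots> = length xs - 2" using assms by (subst card_Diff_subset) auto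
    finally show ?thesis using assms by simp
  qed
  then show ?thesis unfolding merge_pair_def by simp
qed

text \<open>Blechman--Shustin multiplicity theta_N, N = length of the list (positions 0-based).
 For lists of length < 3 it is not defined in the paper; we set it to 0 (never used).\<close>
function theta :: "vec2 list \<Rightarrow> lpoly" where
  "theta xs =
    (if length xs < 3 then 0
     else if length xs = 3 then theta3 (xs ! 0) (xs ! 1) (xs ! 2)
     else (\<Sum>(i, j) \<in> {(i, j). i < j \<and> j < length xs}.
             theta (merge_pair xs i j) * theta3 (xs ! i) (xs ! j) (- (xs ! i + xs ! j))))"
  by pat_completeness auto
termination
  apply (relation "measure length")
   apply simp
  apply (auto simp: length_merge_pair)
  done

declare theta.simps[simp del]

definition orderings :: "nat \<Rightarrow> nat list set" where
  "orderings N = {p. distinct p \<and> set p = {0..<N}}"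

definition rot_orbit :: "nat list \<Rightarrow> nat list set" where
  "rot_orbit p = {rotate r p | r. r < length p}"

definition cyclic_perms :: "nat \<Rightarrow> nat list set set" where
  "cyclic_perms N = rot_orbit ` orderings N"

text \<open>k(omega) for a representative ordering p: sum over positions 2 <= i < j <= N
 (1-based), i.e. 1 <= i < j < N (0-based).\<close>
definition k_ord :: "vec2 list \<Rightarrow> nat list \<Rightarrow> int" where
  "k_ord a p = (\<Sum>(i, j) \<in> {(i, j). 1 \<le> i \<and> i < j \<and> j < length a}.
                   wedge (a ! (p ! i)) (a ! (p ! j)))"

definition mu :: "vec2 list \<Rightarrow> lpoly" where
  "mu a = (\<Sum>\<omega> \<in> cyclic_perms (length a). qhalf (k_ord a (SOME p. p \<in> \<omega>)))"

end

(* Let K(v_1, ..., v_m) be the sum of wedge(v_i, v_j) over i < j (wedge_pairs), and S(a) the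
   sum of q^(K/2) over all N! orderings of a_1, ..., a_N (ordering_sum).  Since the a_i sum to 0,
   K is invariant under rotation and agrees with k(omega) on every representative of omega, so
   S(a) = N mu(a).  Merging two adjacent entries u, v of an ordering into u + v lowers K by
   wedge(u, v), and an ordering of a with a marked adjacent position is the same as a pair
   i < j, an ordering of the merged list and an order of a_i, a_j.  Hence the sum over i < j of
   S(merge_ij a) [a_i, a_j]_+ equals (N - 1) S(a), which is the recursion of theta up to a
   factor.  Induction on N from N = 3, where the six orderings are checked directly, gives
   theta = (N - 1)!/3! S(a). *)

theory Submission
  imports Defs "HOL-Combinatorics.Multiset_Permutations"
begin

lemma wedge_add_left: "wedge (x + y) z = wedge x z + wedge y z"
  by (simp add: wedge_def algebra_simps)

lemma wedge_add_right: "wedge z (x + y) = wedge z x + wedge z y"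
  by (simp add: wedge_def algebra_simps)

lemma wedge_uminus_right: "wedge x (- y) = - wedge x y"
  by (simp add: wedge_def)

lemma wedge_self [simp]: "wedge x x = 0"
  by (simp add: wedge_def)

lemma wedge_zero_left [simp]: "wedge 0 x = 0"
  by (simp add: wedge_def)

lemma wedge_zero_right [simp]: "wedge x 0 = 0"
  by (simp add: wedge_def)

lemma wedge_antisym: "wedge y x = - wedge x y"
  by (simp add: wedge_def)

lemma qhalf_add: "qhalf (m + k) = qhalf m * qhalf k"
  by (simp add: qhalf_def fls_X_intpow_times_fls_X_intpow)

lemma bracket_plus_conv_qhalf: "bracket_plus x y = qhalf (wedge x y) + qhalf (wedge y x)"
  by (simp add: bracket_plus_def wedge_antisym[of y x])

fun wedge_pairs :: "vec2 list \<Rightarrow> int" where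
  "wedge_pairs [] = 0"
| "wedge_pairs (v # vs) = wedge v (sum_list vs) + wedge_pairs vs"

lemma wedge_pairs_append:
  "wedge_pairs (xs @ ys) = wedge_pairs xs + wedge_pairs ys + wedge (sum_list xs) (sum_list ys)"
  by (induction xs) (simp_all add: wedge_add_left wedge_add_right)

lemma wedge_pairs_merge_adjacent:
  "wedge_pairs (xs @ u # v # ys) = wedge_pairs (xs @ (u + v) # ys) + wedge u v"
  by (simp add: wedge_pairs_append wedge_add_left wedge_add_right)

lemma wedge_pairs_Cons_balanced:
  assumes "v + sum_list vs = 0"
  shows "wedge_pairs (v # vs) = wedge_pairs vs"
proof -
  have "sum_list vs = - v" using assms by (simp add: eq_neg_iff_add_eq_0 add.commute)
  then show ?thesis by (simp add: wedge_uminus_right)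
qed

lemma wedge_pairs_rotate1:
  assumes "sum_list vs = 0"
  shows "wedge_pairs (rotate1 vs) = wedge_pairs vs"
proof (cases vs)
  case (Cons v ws)
  then have "wedge_pairs (rotate1 vs) = wedge_pairs ws + wedge (sum_list ws) v"
    by (simp add: wedge_pairs_append)
  also have "\<dots> = wedge_pairs vs"
    using assms Cons wedge_pairs_Cons_balanced[of v ws]
    by (simp add: wedge_antisym[of v] eq_neg_iff_add_eq_0 add.commute wedge_uminus_right)
  finally show ?thesis .
qed simp

lemma sum_list_rotate: "sum_list (rotate r xs) = sum_list (xs :: 'a :: comm_monoid_add list)"
proof (induction r)
  case (Suc r)
  then show ?case by (cases "rotate r xs") (simp_all add: add.commute)
qed simp

lemma wedge_pairs_rotate:
  assumes "sum_list vs = 0"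
  shows "wedge_pairs (rotate r vs) = wedge_pairs vs"
proof (induction r)
  case (Suc r)
  have "sum_list (rotate r vs) = 0" using assms by (simp add: sum_list_rotate)
  then show ?case using Suc by (simp add: wedge_pairs_rotate1)
qed simp

lemma wedge_sum_list_right: "wedge v (sum_list vs) = (\<Sum>j<length vs. wedge v (vs ! j))"
  by (induction vs) (simp_all add: wedge_add_right sum.lessThan_Suc_shift del: sum.lessThan_Suc)

lemma wedge_pairs_conv_sum:
  "wedge_pairs vs = (\<Sum>i<length vs. \<Sum>j = Suc i..<length vs. wedge (vs ! i) (vs ! j))"
proof (induction vs)
  case (Cons v vs)
  have "(\<Sum>i<length (v # vs). \<Sum>j = Suc i..<length (v # vs). wedge ((v # vs) ! i) ((v # vs) ! j))
      = (\<Sum>j = Suc 0..<Suc (length vs). wedge v ((v # vs) ! j))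
        + (\<Sum>i<length vs. \<Sum>j = Suc (Suc i)..<Suc (length vs). wedge (vs ! i) ((v # vs) ! j))"
    by (simp only: length_Cons sum.lessThan_Suc_shift nth_Cons_0 nth_Cons_Suc)
  also have "\<dots> = (\<Sum>j<length vs. wedge v (vs ! j))
        + (\<Sum>i<length vs. \<Sum>j = Suc i..<length vs. wedge (vs ! i) (vs ! j))"
    by (simp only: sum.shift_bounds_Suc_ivl o_def nth_Cons_Suc atLeast0LessThan)
  finally show ?case
    using Cons by (simp add: wedge_sum_list_right)
qed simp

lemma k_ord_eq_wedge_pairs:
  assumes "length p = length a" and "sum_list (map (nth a) p) = 0"
  shows "k_ord a p = wedge_pairs (map (nth a) p)"
proof (cases p)
  case (Cons x ps)
  let ?m = "length ps"
  have pairs: "{(i, j). 1 \<le> i \<and> i < j \<and> j < length a} = Sigma {Suc 0..<Suc ?m} (\<lambda>i. {Suc i..<Suc ?m})"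
    using assms(1) Cons by auto
  have "k_ord a p = (\<Sum>i = Suc 0..<Suc ?m. \<Sum>j = Suc i..<Suc ?m. wedge (a ! (p ! i)) (a ! (p ! j)))"
    unfolding k_ord_def pairs by (rule sum.Sigma[symmetric]) auto
  also have "\<dots> = wedge_pairs (map (nth a) ps)"
    by (simp only: wedge_pairs_conv_sum sum.shift_bounds_Suc_ivl o_def Cons nth_Cons_Suc
        length_map atLeast0LessThan)
      (auto intro!: sum.cong)
  also have "\<dots> = wedge_pairs (map (nth a) p)"
    using assms(2) Cons by (simp add: wedge_pairs_Cons_balanced del: wedge_pairs.simps)
  finally show ?thesis .
qed (use assms in \<open>simp add: k_ord_def\<close>)

definition ordering_sum :: "(nat \<Rightarrow> vec2) \<Rightarrow> nat set \<Rightarrow> lpoly" where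
  "ordering_sum g A = (\<Sum>p\<in>permutations_of_set A. qhalf (wedge_pairs (map g p)))"

lemma ordering_sum_cong:
  assumes "\<And>k. k \<in> A \<Longrightarrow> g k = h k"
  shows "ordering_sum g A = ordering_sum h A"
  unfolding ordering_sum_def
proof (rule sum.cong[OF refl])
  fix p assume "p \<in> permutations_of_set A"
  then have "map g p = map h p" using assms by (auto simp: permutations_of_set_def)
  then show "qhalf (wedge_pairs (map g p)) = qhalf (wedge_pairs (map h p))" by (simp only:)
qed

lemma ordering_sum_reindex:
  assumes "inj_on h A"
  shows "ordering_sum g (h ` A) = ordering_sum (g \<circ> h) A"
proof -
  have "inj_on (map h) (permutations_of_set A)"
    using assms by (auto simp: inj_on_def permutations_of_set_def intro: map_inj_on)
  then show ?thesis
    by (simp add: ordering_sum_def permutations_of_set_image_inj[OF assms] sum.reindex)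
qed

lemma ordering_sum_nth_map:
  assumes "distinct xs"
  shows "ordering_sum (nth (map g xs)) {0..<length xs} = ordering_sum g (set xs)"
proof -
  have "set xs = nth xs ` {0..<length xs}" by (auto simp: set_conv_nth)
  moreover have "inj_on (nth xs) {0..<length xs}" using assms by (simp add: inj_on_nth)
  ultimately have "ordering_sum g (set xs) = ordering_sum (g \<circ> nth xs) {0..<length xs}"
    by (simp add: ordering_sum_reindex)
  also have "\<dots> = ordering_sum (nth (map g xs)) {0..<length xs}"
    by (rule ordering_sum_cong) simp
  finally show ?thesis ..
qed

lemma orderings_eq_permutations_of_set: "orderings n = permutations_of_set {0..<n}"
  by (auto simp: orderings_def permutations_of_set_def)

lemma length_ordering: "p \<in> orderings n \<Longrightarrow> length p = n"
  by (simp add: orderings_eq_permutations_of_set length_finite_permutations_of_set)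

lemma sum_list_map_nth_ordering:
  fixes a :: "'a :: comm_monoid_add list"
  assumes "p \<in> orderings (length a)"
  shows "sum_list (map (nth a) p) = sum_list a"
proof -
  have "sum_list (map (nth a) p) = sum (nth a) (set p)"
    using assms by (simp add: orderings_def sum_list_distinct_conv_sum_set)
  then show ?thesis
    using assms by (simp add: orderings_def sum_list_sum_nth)
qed

lemma rot_orbit_altdef:
  assumes "p \<noteq> []"
  shows "rot_orbit p = range (\<lambda>r. rotate r p)"
proof -
  have "rotate r p = rotate (r mod length p) p \<and> r mod length p < length p" for r
    using assms by (simp add: rotate_conv_mod[of r p])
  then show ?thesis
    unfolding rot_orbit_def by blast
qed

lemma rot_orbit_rotate: "rot_orbit (rotate r p) = rot_orbit p"
proof (cases "p = []")
  case False
  let ?L = "length p"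
  have rotate_back: "rotate s p \<in> range (\<lambda>t. rotate t (rotate r p))" for s
  proof -
    have "r \<le> Suc r * ?L" using mult_le_mono2[of 1 ?L "Suc r"] False by (simp add: Suc_le_eq)
    then have "rotate (s + Suc r * ?L - r) (rotate r p) = rotate (s + Suc r * ?L) p"
      by (simp add: rotate_rotate)
    also have "\<dots> = rotate s p"
      by (subst (1 2) rotate_conv_mod) (simp only: mod_mult_self1)
    finally show ?thesis by (metis rangeI)
  qed
  have "range (\<lambda>t. rotate t (rotate r p)) = range (\<lambda>s. rotate s p)"
    using rotate_back by (auto simp: rotate_rotate)
  then show ?thesis
    using False by (simp add: rot_orbit_altdef)
qed simp

lemma self_mem_rot_orbit: "p \<noteq> [] \<Longrightarrow> p \<in> rot_orbit p"
  using rangeI[of "\<lambda>r. rotate r p" 0] by (simp add: rot_orbit_altdef)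

lemma card_rot_orbit:
  assumes "distinct p"
  shows "card (rot_orbit p) = length p"
proof -
  have head: "rotate r p ! 0 = p ! r" if "r < length p" for r
    using that by (subst nth_rotate) auto
  have "inj_on (\<lambda>r. rotate r p) {..<length p}"
  proof (rule inj_onI)
    fix r s assume "r \<in> {..<length p}" "s \<in> {..<length p}" "rotate r p = rotate s p"
    then show "r = s" using assms head by (metis lessThan_iff nth_eq_iff_index_eq)
  qed
  moreover have "rot_orbit p = (\<lambda>r. rotate r p) ` {..<length p}"
    by (auto simp: rot_orbit_def)
  ultimately show ?thesis by (simp add: card_image)
qed

lemma rot_orbit_class:
  assumes "p \<in> orderings n" and "n \<ge> 1"
  shows "{q \<in> orderings n. rot_orbit q = rot_orbit p} = rot_orbit p"
proof (intro set_eqI iffI)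
  fix q assume "q \<in> {q \<in> orderings n. rot_orbit q = rot_orbit p}"
  moreover have "q \<in> rot_orbit q" if "q \<in> orderings n"
    using that assms(2) self_mem_rot_orbit[of q] length_ordering by fastforce
  ultimately show "q \<in> rot_orbit p" by blast
next
  fix q assume "q \<in> rot_orbit p"
  then obtain r where "q = rotate r p" by (auto simp: rot_orbit_def)
  then show "q \<in> {q \<in> orderings n. rot_orbit q = rot_orbit p}"
    using assms(1) by (simp add: orderings_def rot_orbit_rotate)
qed

lemma sum_orderings_by_cyclic_perms:
  fixes f :: "nat list \<Rightarrow> 'b :: comm_semiring_1"
  assumes "n \<ge> 1" and invariant: "\<And>p r. p \<in> orderings n \<Longrightarrow> f (rotate r p) = f p"
  shows "(\<Sum>p\<in>orderings n. f p) = (\<Sum>\<omega>\<in>cyclic_perms n. of_nat n * f (SOME p. p \<in> \<omega>))"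
proof -
  have "(\<Sum>p\<in>orderings n. f p) = (\<Sum>\<omega>\<in>cyclic_perms n. \<Sum>q\<in>{q \<in> orderings n. rot_orbit q = \<omega>}. f q)"
    by (rule sum.group[symmetric])
      (auto simp: cyclic_perms_def orderings_eq_permutations_of_set)
  also have "\<dots> = (\<Sum>\<omega>\<in>cyclic_perms n. of_nat n * f (SOME p. p \<in> \<omega>))"
  proof (rule sum.cong[OF refl])
    fix \<omega> assume "\<omega> \<in> cyclic_perms n"
    then obtain p where p: "p \<in> orderings n" "\<omega> = rot_orbit p" by (auto simp: cyclic_perms_def)
    have orbit_value: "f q = f p" if "q \<in> \<omega>" for q
      using that p by (auto simp: rot_orbit_def invariant)
    have "p \<in> \<omega>" using p rot_orbit_class[OF p(1) assms(1)] by blast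
    then have "(SOME p. p \<in> \<omega>) \<in> \<omega>" by (rule someI)
    then have "f (SOME p. p \<in> \<omega>) = f p" by (rule orbit_value)
    moreover have "card \<omega> = n"
      using p by (simp add: card_rot_orbit length_ordering orderings_def)
    ultimately show "(\<Sum>q\<in>{q \<in> orderings n. rot_orbit q = \<omega>}. f q) = of_nat n * f (SOME p. p \<in> \<omega>)"
      using rot_orbit_class[OF p(1) assms(1)] p(2) orbit_value by simp
  qed
  finally show ?thesis .
qed

lemma of_nat_mult_mu:
  assumes "length a \<ge> 1" and "sum_list a = 0"
  shows "of_nat (length a) * mu a = ordering_sum (nth a) {0..<length a}"
proof -
  let ?f = "\<lambda>p. qhalf (wedge_pairs (map (nth a) p))"
  have "ordering_sum (nth a) {0..<length a} = (\<Sum>p\<in>orderings (length a). ?f p)"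
    by (simp add: ordering_sum_def orderings_eq_permutations_of_set)
  also have "\<dots> = (\<Sum>\<omega>\<in>cyclic_perms (length a). of_nat (length a) * ?f (SOME p. p \<in> \<omega>))"
    using assms
    by (intro sum_orderings_by_cyclic_perms)
      (simp_all add: rotate_map[symmetric] wedge_pairs_rotate sum_list_map_nth_ordering)
  also have "\<dots> = of_nat (length a) * mu a"
    unfolding mu_def sum_distrib_left
  proof (intro sum.cong refl arg_cong[where f = "\<lambda>k. _ * qhalf k"])
    fix \<omega> assume "\<omega> \<in> cyclic_perms (length a)"
    then obtain p where p: "p \<in> orderings (length a)" "\<omega> = rot_orbit p"
      by (auto simp: cyclic_perms_def)
    then have orbit: "\<omega> = {q \<in> orderings (length a). rot_orbit q = rot_orbit p}"
      using rot_orbit_class assms(1) by blast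
    then have "p \<in> \<omega>" using p(1) by blast
    then have "(SOME p. p \<in> \<omega>) \<in> \<omega>" by (rule someI)
    then have "(SOME p. p \<in> \<omega>) \<in> orderings (length a)" using orbit by blast
    then show "wedge_pairs (map (nth a) (SOME p. p \<in> \<omega>)) = k_ord a (SOME p. p \<in> \<omega>)"
      using assms(2) by (simp add: k_ord_eq_wedge_pairs length_ordering sum_list_map_nth_ordering)
  qed
  finally show ?thesis ..
qed

(* The list merge_pair a i j is modelled on the index set {0..<length a} - {i, j} together with
   the fresh index length a, which carries a_i + a_j. *)
definition merged_vec :: "vec2 list \<Rightarrow> nat \<Rightarrow> nat \<Rightarrow> nat \<Rightarrow> vec2" where
  "merged_vec a i j k = (if k = length a then a ! i + a ! j else a ! k)"

lemma merge_pair_conv_map: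
  obtains xs where "merge_pair a i j = map (merged_vec a i j) xs" and "distinct xs"
    and "set xs = insert (length a) ({0..<length a} - {i, j})"
proof
  let ?xs = "filter (\<lambda>k. k \<noteq> i \<and> k \<noteq> j) [0..<length a] @ [length a]"
  show "merge_pair a i j = map (merged_vec a i j) ?xs"
    by (simp add: merge_pair_def merged_vec_def)
  show "distinct ?xs" "set ?xs = insert (length a) ({0..<length a} - {i, j})"
    by auto
qed

lemma
  assumes "i < j" and "j < length a"
  shows length_merge_pair_eq: "length (merge_pair a i j) = length a - 1"
    and sum_list_merge_pair: "sum_list (merge_pair a i j) = sum_list a"
    and ordering_sum_merge_pair: "ordering_sum (nth (merge_pair a i j)) {0..<length a - 1}
          = ordering_sum (merged_vec a i j) (insert (length a) ({0..<length a} - {i, j}))"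
proof -
  obtain xs where xs: "merge_pair a i j = map (merged_vec a i j) xs" "distinct xs"
    "set xs = insert (length a) ({0..<length a} - {i, j})"
    by (rule merge_pair_conv_map)
  have "length xs = card (insert (length a) ({0..<length a} - {i, j}))"
    using xs by (simp add: distinct_card[symmetric])
  also have "\<dots> = length a - 1" using assms by (simp add: card_Diff_subset)
  finally show length_eq: "length (merge_pair a i j) = length a - 1" using xs by simp
  have "sum_list (merge_pair a i j) = sum (merged_vec a i j) (insert (length a) ({0..<length a} - {i, j}))"
    using xs by (simp add: sum_list_distinct_conv_sum_set)
  also have "\<dots> = sum (nth a) {i, j} + sum (nth a) ({0..<length a} - {i, j})"
    using assms by (simp add: merged_vec_def)
  also have "\<dots> = sum_list a"
    using assms by (simp add: sum_list_sum_nth sum.subset_diff[of "{i, j}" "{0..<length a}"] add.commute)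
  finally show "sum_list (merge_pair a i j) = sum_list a" .
  show "ordering_sum (nth (merge_pair a i j)) {0..<length a - 1}
          = ordering_sum (merged_vec a i j) (insert (length a) ({0..<length a} - {i, j}))"
    using xs length_eq ordering_sum_nth_map[of xs] by simp
qed

definition unmerge :: "'a \<Rightarrow> 'a \<Rightarrow> 'a \<Rightarrow> 'a list \<Rightarrow> 'a list" where
  "unmerge w u v p = concat (map (\<lambda>k. if k = w then [u, v] else [k]) p)"

lemma unmerge_append_Cons:
  assumes "w \<notin> set xs" and "w \<notin> set ys"
  shows "unmerge w u v (xs @ w # ys) = xs @ u # v # ys"
proof -
  have "unmerge w u v zs = zs" if "w \<notin> set zs" for zs
    using that by (induction zs) (auto simp: unmerge_def)
  then show ?thesis using assms by (simp add: unmerge_def)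
qed

lemma length_takeWhile_neq_append_Cons:
  "w \<notin> set xs \<Longrightarrow> length (takeWhile (\<lambda>k. k \<noteq> w) (xs @ w # ys)) = length xs"
  by (induction xs) auto

lemma permutation_split_at:
  assumes "p \<in> permutations_of_set A" and "w \<in> A"
  obtains xs ys where "p = xs @ w # ys" and "w \<notin> set xs" and "w \<notin> set ys"
proof -
  have "w \<in> set p" "distinct p" using assms by (auto simp: permutations_of_set_def)
  moreover obtain xs ys where "p = xs @ w # ys" using \<open>w \<in> set p\<close> split_list by metis
  ultimately show ?thesis using that by auto
qed

lemma placeholder_permutation_iff:
  assumes "u \<in> A" "v \<in> A" "u \<noteq> v" "w \<notin> A"
  shows "xs @ w # ys \<in> permutations_of_set (insert w (A - {u, v}))
     \<longleftrightarrow> xs @ u # v # ys \<in> permutations_of_set A"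
  using assms by (auto simp: permutations_of_set_def)

lemma id_take_nth_nth_drop:
  "Suc t < length q \<Longrightarrow> q = take t q @ q ! t # q ! Suc t # drop (Suc (Suc t)) q"
  using id_take_nth_drop[of t q] Cons_nth_drop_Suc[of "Suc t" q] by simp

lemma bij_betw_unmerge:
  assumes "u \<in> A" "v \<in> A" "u \<noteq> v" "w \<notin> A"
  shows "bij_betw (\<lambda>p. (unmerge w u v p, length (takeWhile (\<lambda>k. k \<noteq> w) p)))
           (permutations_of_set (insert w (A - {u, v})))
           {(q, t). q \<in> permutations_of_set A \<and> Suc t < length q \<and> q ! t = u \<and> q ! Suc t = v}"
    (is "bij_betw ?f ?P ?Q")
proof (rule bij_betw_byWitness[where f' = "\<lambda>(q, t). take t q @ w # drop (Suc (Suc t)) q"])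
  let ?g = "\<lambda>(q, t). take t q @ w # drop (Suc (Suc t)) q"
  have split_P: "\<exists>xs ys. p = xs @ w # ys \<and> w \<notin> set xs \<and> w \<notin> set ys" if "p \<in> ?P" for p
    using permutation_split_at[OF that insertI1] by metis
  have split_Q: "\<exists>xs ys. x = (xs @ u # v # ys, length xs) \<and> w \<notin> set xs \<and> w \<notin> set ys
      \<and> xs @ u # v # ys \<in> permutations_of_set A" if Q: "x \<in> ?Q" for x
  proof -
    obtain q t where x: "x = (q, t)" "q \<in> permutations_of_set A" "Suc t < length q"
      "q ! t = u" "q ! Suc t = v"
      using Q by (cases x) auto
    then have "q = take t q @ u # v # drop (Suc (Suc t)) q"
      using id_take_nth_nth_drop by metis
    moreover have "w \<notin> set q" using x(2) assms(4) by (simp add: permutations_of_set_def)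
    ultimately show ?thesis
      using x by (metis length_take min.absorb4 Suc_lessD Un_iff set_append set_subset_Cons subsetD)
  qed
  show "\<forall>p\<in>?P. ?g (?f p) = p"
  proof
    fix p assume "p \<in> ?P"
    then obtain xs ys where "p = xs @ w # ys" "w \<notin> set xs" "w \<notin> set ys" using split_P by blast
    then show "?g (?f p) = p" by (simp add: unmerge_append_Cons length_takeWhile_neq_append_Cons)
  qed
  show "?f ` ?P \<subseteq> ?Q"
  proof (rule image_subsetI)
    fix p assume "p \<in> ?P"
    then obtain xs ys where "p = xs @ w # ys" "w \<notin> set xs" "w \<notin> set ys" using split_P by blast
    then show "?f p \<in> ?Q"
      using \<open>p \<in> ?P\<close> placeholder_permutation_iff[OF assms]
      by (simp add: unmerge_append_Cons length_takeWhile_neq_append_Cons nth_append)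
  qed
  show "\<forall>x\<in>?Q. ?f (?g x) = x"
  proof
    fix x assume "x \<in> ?Q"
    then obtain xs ys where "x = (xs @ u # v # ys, length xs)" "w \<notin> set xs" "w \<notin> set ys"
      using split_Q by blast
    then show "?f (?g x) = x" by (simp add: unmerge_append_Cons length_takeWhile_neq_append_Cons)
  qed
  show "?g ` ?Q \<subseteq> ?P"
  proof (rule image_subsetI)
    fix x assume "x \<in> ?Q"
    then obtain xs ys where "x = (xs @ u # v # ys, length xs)" "xs @ u # v # ys \<in> permutations_of_set A"
      using split_Q by blast
    then show "?g x \<in> ?P" using placeholder_permutation_iff[OF assms] by simp
  qed
qed

lemma sum_off_diagonal:
  fixes f :: "nat \<Rightarrow> nat \<Rightarrow> 'b :: comm_monoid_add"
  shows "(\<Sum>(u, v) \<in> {(u, v). u < n \<and> v < n \<and> u \<noteq> v}. f u v)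
       = (\<Sum>(i, j) \<in> {(i, j). i < j \<and> j < n}. f i j + f j i)"
proof -
  let ?L = "{(i, j). i < j \<and> j < n}"
  have fin: "finite ?L" by (rule finite_subset[of _ "{..<n} \<times> {..<n}"]) auto
  have "{(u, v). u < n \<and> v < n \<and> u \<noteq> v} = ?L \<union> prod.swap ` ?L" by auto
  moreover have "?L \<inter> prod.swap ` ?L = {}" by auto
  ultimately have "(\<Sum>(u, v) \<in> {(u, v). u < n \<and> v < n \<and> u \<noteq> v}. f u v)
      = (\<Sum>(i, j) \<in> ?L. f i j) + (\<Sum>(i, j) \<in> prod.swap ` ?L. f i j)"
    using fin by (simp add: sum.union_disjoint)
  also have "\<dots> = (\<Sum>(i, j) \<in> ?L. f i j + f j i)"
    by (simp add: sum.reindex sum.distrib split_def)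
  finally show ?thesis .
qed

lemma ordering_sum_merged_vec_mult:
  assumes "u < length a" "v < length a" "u \<noteq> v"
  shows "ordering_sum (merged_vec a u v) (insert (length a) ({0..<length a} - {u, v}))
           * qhalf (wedge (a ! u) (a ! v))
       = (\<Sum>(q, t) \<in> {(q, t). q \<in> permutations_of_set {0..<length a} \<and> Suc t < length q
                              \<and> q ! t = u \<and> q ! Suc t = v}.
            qhalf (wedge_pairs (map (nth a) q)))"
proof -
  let ?n = "length a"
  have unmerged: "qhalf (wedge_pairs (map (merged_vec a u v) p)) * qhalf (wedge (a ! u) (a ! v))
      = qhalf (wedge_pairs (map (nth a) (unmerge ?n u v p)))"
    if perm: "p \<in> permutations_of_set (insert ?n ({0..<?n} - {u, v}))" for p
  proof -
    obtain xs ys where p: "p = xs @ ?n # ys" "?n \<notin> set xs" "?n \<notin> set ys"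
      using permutation_split_at[OF perm insertI1] .
    have unchanged: "map (merged_vec a u v) zs = map (nth a) zs" if "?n \<notin> set zs" for zs
      using that by (auto simp: merged_vec_def)
    show ?thesis
      using wedge_pairs_merge_adjacent[of "map (nth a) xs" "a ! u" "a ! v" "map (nth a) ys"]
      by (simp add: p unchanged unmerge_append_Cons merged_vec_def qhalf_add)
  qed
  have "bij_betw (\<lambda>p. (unmerge ?n u v p, length (takeWhile (\<lambda>k. k \<noteq> ?n) p)))
      (permutations_of_set (insert ?n ({0..<?n} - {u, v})))
      {(q, t). q \<in> permutations_of_set {0..<?n} \<and> Suc t < length q \<and> q ! t = u \<and> q ! Suc t = v}"
    using assms by (intro bij_betw_unmerge) auto
  from sum.reindex_bij_betw[OF this, of "\<lambda>(q, t). qhalf (wedge_pairs (map (nth a) q))"]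
  show ?thesis
    unfolding ordering_sum_def sum_distrib_right by (simp add: unmerged)
qed

lemma sum_permutations_by_adjacent_pair:
  fixes G :: "nat list \<Rightarrow> 'b :: comm_semiring_1"
  shows "of_nat (n - 1) * (\<Sum>q\<in>permutations_of_set {0..<n}. G q)
       = (\<Sum>(u, v) \<in> {(u, v). u < n \<and> v < n \<and> u \<noteq> v}.
            \<Sum>(q, t) \<in> {(q, t). q \<in> permutations_of_set {0..<n} \<and> Suc t < length q
                                 \<and> q ! t = u \<and> q ! Suc t = v}. G q)"
proof -
  let ?P = "permutations_of_set {0..<n}"
  let ?S = "{(q, t). q \<in> ?P \<and> Suc t < length q}"
  let ?D = "{(u, v). u < n \<and> v < n \<and> u \<noteq> v}"
  let ?adj = "\<lambda>(q, t). (q ! t, q ! Suc t)"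
  have length_P: "length q = n" if "q \<in> ?P" for q
    using that by (simp add: length_finite_permutations_of_set)
  have "of_nat (n - 1) * (\<Sum>q\<in>?P. G q) = (\<Sum>q\<in>?P. \<Sum>t<n - 1. G q)"
    by (simp add: sum_distrib_left)
  also have "\<dots> = (\<Sum>(q, t) \<in> ?P \<times> {..<n - 1}. G q)"
    by (rule sum.cartesian_product)
  also have "?P \<times> {..<n - 1} = ?S"
    using length_P by fastforce
  also have "(\<Sum>(q, t) \<in> ?S. G q) = (\<Sum>y \<in> ?D. \<Sum>(q, t) \<in> {x. x \<in> ?S \<and> ?adj x = y}. G q)"
  proof (rule sum.group[symmetric])
    show "finite ?S"
      by (rule finite_subset[of _ "?P \<times> {..<n}"]) (auto dest: length_P)
    show "finite ?D"
      by (rule finite_subset[of _ "{..<n} \<times> {..<n}"]) auto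
    show "?adj ` ?S \<subseteq> ?D"
    proof clarify
      fix q t assume "q \<in> ?P" "Suc t < length q"
      moreover have "distinct q" "set q = {0..<n}"
        using \<open>q \<in> ?P\<close> by (auto simp: permutations_of_set_def)
      ultimately show "q ! t < n \<and> q ! Suc t < n \<and> q ! t \<noteq> q ! Suc t"
        by (auto simp: nth_eq_iff_index_eq dest: nth_mem)
    qed
  qed
  also have "\<dots> = (\<Sum>(u, v) \<in> ?D. \<Sum>(q, t) \<in> {(q, t). q \<in> ?P \<and> Suc t < length q
                                 \<and> q ! t = u \<and> q ! Suc t = v}. G q)"
  proof (rule sum.cong[OF refl], clarify)
    fix u v
    have "{x. x \<in> ?S \<and> ?adj x = (u, v)}
        = {(q, t). q \<in> ?P \<and> Suc t < length q \<and> q ! t = u \<and> q ! Suc t = v}"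
      by auto
    then show "(\<Sum>(q, t) \<in> {x. x \<in> ?S \<and> ?adj x = (u, v)}. G q)
        = (\<Sum>(q, t) \<in> {(q, t). q \<in> ?P \<and> Suc t < length q \<and> q ! t = u \<and> q ! Suc t = v}. G q)"
      by (simp only:)
  qed
  finally show ?thesis .
qed

lemma sum_merged_ordering_sums:
  assumes "length a = n"
  shows "(\<Sum>(i, j) \<in> {(i, j). i < j \<and> j < n}.
            ordering_sum (merged_vec a i j) (insert n ({0..<n} - {i, j})) * bracket_plus (a ! i) (a ! j))
       = of_nat (n - 1) * ordering_sum (nth a) {0..<n}"
proof -
  define F where "F u v = ordering_sum (merged_vec a u v) (insert n ({0..<n} - {u, v}))
                            * qhalf (wedge (a ! u) (a ! v))" for u v
  have "merged_vec a j i = merged_vec a i j" for i j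
    by (auto simp: merged_vec_def add.commute)
  then have "(\<Sum>(i, j) \<in> {(i, j). i < j \<and> j < n}.
            ordering_sum (merged_vec a i j) (insert n ({0..<n} - {i, j})) * bracket_plus (a ! i) (a ! j))
      = (\<Sum>(i, j) \<in> {(i, j). i < j \<and> j < n}. F i j + F j i)"
    by (simp add: F_def bracket_plus_conv_qhalf distrib_left insert_commute)
  also have "\<dots> = (\<Sum>(u, v) \<in> {(u, v). u < n \<and> v < n \<and> u \<noteq> v}. F u v)"
    by (rule sum_off_diagonal[symmetric])
  also have "\<dots> = of_nat (n - 1) * ordering_sum (nth a) {0..<n}"
    unfolding ordering_sum_def sum_permutations_by_adjacent_pair
    using assms by (intro sum.cong refl) (auto simp: F_def ordering_sum_merged_vec_mult)
  finally show ?thesis .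
qed

lemma ordering_sum_three:
  assumes "length a = 3" and "sum_list a = 0"
  shows "ordering_sum (nth a) {0..<3} = 3 * bracket_plus (a ! 0) (a ! 1)"
proof -
  obtain x y z where a: "a = [x, y, z]"
    using assms(1) by (auto simp: numeral_3_eq_3 length_Suc_conv)
  have "z + (x + y) = 0"
    using assms(2) by (simp add: a add.commute add.left_commute)
  then have z: "z = - (x + y)"
    by (rule eq_neg_iff_add_eq_0[THEN iffD2])
  define w where "w = wedge x y"
  have wedge_pairs_perms: "wedge_pairs [x, y, z] = w" "wedge_pairs [x, z, y] = - w"
    "wedge_pairs [y, x, z] = - w" "wedge_pairs [y, z, x] = w"
    "wedge_pairs [z, x, y] = w" "wedge_pairs [z, y, x] = - w"
    unfolding z w_def by (simp_all add: wedge_def algebra_simps)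
  have "{0..<3} = {0, 1, 2::nat}" by auto
  then have perms: "permutations_of_set {0..<3}
      = {[0, 1, 2], [0, 2, 1], [1, 0, 2], [1, 2, 0], [2, 0, 1], [2, 1, 0::nat]}"
    by (simp only:) (subst permutations_of_set_nonempty, simp,
        simp add: permutations_of_set_doubleton insert_Diff_if insert_commute)
  have "ordering_sum (nth a) {0..<3} = qhalf (wedge_pairs [x, y, z]) + (qhalf (wedge_pairs [x, z, y])
     + (qhalf (wedge_pairs [y, x, z]) + (qhalf (wedge_pairs [y, z, x]) + (qhalf (wedge_pairs [z, x, y])
     + qhalf (wedge_pairs [z, y, x])))))"
    unfolding ordering_sum_def perms by (simp add: a del: wedge_pairs.simps)
  also have "\<dots> = 3 * (qhalf w + qhalf (- w))"
    unfolding wedge_pairs_perms by algebra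
  also have "\<dots> = 3 * bracket_plus (a ! 0) (a ! 1)"
    by (simp add: a bracket_plus_def w_def)
  finally show ?thesis .
qed

lemma fls_const_fact_mult:
  assumes "n \<ge> 1"
  shows "fls_const (of_nat (fact (n - 1)) / c) * (of_nat n * X)
       = fls_const (of_nat (fact n) / c) * (X :: 'a :: field fls)"
proof -
  obtain m where n: "n = Suc m" using assms by (cases n) auto
  have "of_nat (fact n) = (of_nat (fact (n - 1)) * of_nat n :: 'a)"
    by (simp add: n algebra_simps)
  then show ?thesis
    by (simp add: fls_of_nat mult.assoc[symmetric])
qed

lemma theta_length_three: "length a = 3 \<Longrightarrow> theta a = bracket_plus (a ! 0) (a ! 1)"
  by (simp add: theta.simps theta3_def)

lemma theta_recursion:
  "length a > 3 \<Longrightarrow> theta a = (\<Sum>(i, j) \<in> {(i, j). i < j \<and> j < length a}.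
                                theta (merge_pair a i j) * bracket_plus (a ! i) (a ! j))"
  by (subst theta.simps) (simp add: theta3_def)

lemma theta_eq_ordering_sum:
  assumes "length a \<ge> 3" and "sum_list a = 0"
  shows "theta a = fls_const (of_nat (fact (length a - 1)) / of_nat (fact 3))
                     * ordering_sum (nth a) {0..<length a}"
  using assms
proof (induction a rule: measure_induct_rule[of length])
  case (less a)
  let ?n = "length a"
  let ?c = "\<lambda>m. fls_const (of_nat (fact m) / of_nat (fact 3) :: rat)"
  consider "?n = 3" | "?n > 3" using less.prems by linarith
  then show ?case
  proof cases
    case 1
    have "?c 2 * 3 = 1"
      by (simp add: fact_numeral fls_const_numeral[symmetric] del: fls_const_numeral)
    then show ?thesis
      using 1 ordering_sum_three[OF 1 less.prems(2)]
      by (simp add: theta_length_three mult.assoc[symmetric])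
  next
    case 2
    have merged: "theta (merge_pair a i j)
        = ?c (?n - 2) * ordering_sum (merged_vec a i j) (insert ?n ({0..<?n} - {i, j}))"
      if ij: "i < j" "j < ?n" for i j
    proof -
      have "theta (merge_pair a i j) = ?c (?n - 2) * ordering_sum (nth (merge_pair a i j)) {0..<?n - 1}"
        using less.IH[of "merge_pair a i j"] ij 2 less.prems(2)
        by (simp add: length_merge_pair_eq sum_list_merge_pair numeral_2_eq_2)
      then show ?thesis by (simp only: ordering_sum_merge_pair[OF ij])
    qed
    have "theta a = ?c (?n - 2) * (\<Sum>(i, j) \<in> {(i, j). i < j \<and> j < ?n}.
        ordering_sum (merged_vec a i j) (insert ?n ({0..<?n} - {i, j})) * bracket_plus (a ! i) (a ! j))"
      unfolding theta_recursion[OF 2] sum_distrib_left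
      by (intro sum.cong refl) (auto simp: merged mult.assoc)
    also have "\<dots> = ?c (?n - 2) * (of_nat (?n - 1) * ordering_sum (nth a) {0..<?n})"
      by (simp only: sum_merged_ordering_sums)
    also have "\<dots> = ?c (?n - 1) * ordering_sum (nth a) {0..<?n}"
      using fls_const_fact_mult[of "?n - 1" "of_nat (fact 3)" "ordering_sum (nth a) {0..<?n}"] 2
      by (simp add: diff_diff_left numeral_2_eq_2)
    finally show ?thesis .
  qed
qed

theorem proposition1p3:
  fixes a :: "vec2 list"
  assumes "length a \<ge> 3"
    and "sum_list a = 0"
  shows "theta a = fls_const (of_nat (fact (length a)) / of_nat (fact 3)) * mu a"
proof -
  have "theta a = fls_const (of_nat (fact (length a - 1)) / of_nat (fact 3))
                    * (of_nat (length a) * mu a)"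
    using theta_eq_ordering_sum[OF assms] of_nat_mult_mu[of a] assms by simp
  also have "\<dots> = fls_const (of_nat (fact (length a)) / of_nat (fact 3)) * mu a"
    using assms(1) by (intro fls_const_fact_mult) simp
  finally show ?thesis .
qed

end
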